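(* Let $R$ be a commutative Noetherian ring of prime characteristic $p$ and $G$ an $x$-torsion-free left $R[x,f]$-module. Then $\mathcal{I}(G)=\{\mathfrak{p}_1\cap\dots\cap\mathfrak{p}_t: t\in\mathbb{N}_0,\ \mathfrak{p}_1,\dots,\mathfrak{p}_t\in\mathcal{I}(G)\cap\operatorname{Spec}(R)\}$, where the empty intersection ($t=0$) is $R$.
   Context: $R[x,f]$ is the Frobenius skew polynomial ring: free left $R$-module on $(x^i)_{i\ge0}$, $xr=r^px$. $x$-torsion-free: $xg=0\Rightarrow g=0$. $\operatorname{grann}N$ is the set of $\sum r_ix^i$ with each $r_ix^i$ annihilating the $R[x,f]$-submodule $N$. $\mathcal{I}(G)$ (the $G$-special $R$-ideals) is the set of ideals $\mathfrak{b}$ of $R$ with $\operatorname{grann}N=\bigoplus_{n\ge0}\mathfrak{b}x^n$ for some $R[x,f]$-submodule $N$ of $G$. *)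

theory Defs
  imports Main HOL.Modules "HOL-Computational_Algebra.Primes"
begin

definition ring_ideal :: "'r::comm_ring_1 set \<Rightarrow> bool" where
  "ring_ideal I \<longleftrightarrow> 0 \<in> I \<and> (\<forall>a\<in>I. \<forall>b\<in>I. a + b \<in> I) \<and> (\<forall>r a. a \<in> I \<longrightarrow> r * a \<in> I)"

definition prime_ideal :: "'r::comm_ring_1 set \<Rightarrow> bool" where
  "prime_ideal P \<longleftrightarrow> ring_ideal P \<and> P \<noteq> UNIV \<and> (\<forall>a b. a * b \<in> P \<longrightarrow> a \<in> P \<or> b \<in> P)"

definition noetherian_ring :: "'r::comm_ring_1 itself \<Rightarrow> bool" where
  "noetherian_ring _ \<longleftrightarrow>
     (\<forall>I :: nat \<Rightarrow> 'r set. (\<forall>n. ring_ideal (I n)) \<and> (\<forall>n. I n \<subseteq> I (Suc n))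
        \<longrightarrow> (\<exists>n. \<forall>m\<ge>n. I m = I n))"

text \<open>A left module over the Frobenius skew polynomial ring R[x,f] is an R-module G
  (scalar multiplication sc) together with the action phi of x, which is additive and
  satisfies x (r g) = r^p (x g), since x r = r^p x.\<close>
definition frob_module :: "nat \<Rightarrow> ('r::comm_ring_1 \<Rightarrow> 'g::ab_group_add \<Rightarrow> 'g) \<Rightarrow> ('g \<Rightarrow> 'g) \<Rightarrow> bool" where
  "frob_module p sc phi \<longleftrightarrow> module sc \<and> (\<forall>g h. phi (g + h) = phi g + phi h)
     \<and> (\<forall>r g. phi (sc r g) = sc (r ^ p) (phi g))"

definition x_torsion_free :: "('g::ab_group_add \<Rightarrow> 'g) \<Rightarrow> bool" where
  "x_torsion_free phi \<longleftrightarrow> (\<forall>g. phi g = 0 \<longrightarrow> g = 0)"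

definition frob_submodule :: "('r::comm_ring_1 \<Rightarrow> 'g::ab_group_add \<Rightarrow> 'g) \<Rightarrow> ('g \<Rightarrow> 'g) \<Rightarrow> 'g set \<Rightarrow> bool" where
  "frob_submodule sc phi N \<longleftrightarrow> module.subspace sc N \<and> (\<forall>g\<in>N. phi g \<in> N)"

text \<open>Elements of R[x,f] are represented by their coefficient sequences
  (finitely supported functions nat => R); f represents sum_i f(i) x^i.
  The homogeneous element r x^i acts on G by g |-> r (phi^i g).\<close>
definition skew_poly :: "(nat \<Rightarrow> 'r::zero) set" where
  "skew_poly = {f. finite {i. f i \<noteq> 0}}"

definition grann :: "('r::comm_ring_1 \<Rightarrow> 'g::ab_group_add \<Rightarrow> 'g) \<Rightarrow> ('g \<Rightarrow> 'g) \<Rightarrow> 'g set \<Rightarrow> (nat \<Rightarrow> 'r) set" where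
  "grann sc phi N = {f \<in> skew_poly. \<forall>i. \<forall>g\<in>N. sc (f i) ((phi ^^ i) g) = 0}"

text \<open>The graded ideal (direct sum over n of b x^n), as a set of coefficient sequences.\<close>
definition graded_ext :: "'r::comm_ring_1 set \<Rightarrow> (nat \<Rightarrow> 'r) set" where
  "graded_ext b = {f \<in> skew_poly. \<forall>i. f i \<in> b}"

definition special_ideals :: "('r::comm_ring_1 \<Rightarrow> 'g::ab_group_add \<Rightarrow> 'g) \<Rightarrow> ('g \<Rightarrow> 'g) \<Rightarrow> 'r set set" where
  "special_ideals sc phi = {b. ring_ideal b \<and>
      (\<exists>N. frob_submodule sc phi N \<and> grann sc phi N = graded_ext b)}"

end

theory Submission
  imports Defs
begin

text \<open>Special ideals are closed under finite intersections and colon ideals, and they are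
  radical: if \<open>r\<^sup>2 \<in> \<frak>b\<close> then \<open>r\<^sup>p x\<close> annihilates the witnessing submodule \<open>N\<close>, so by
  \<open>x\<close>-torsion-freeness \<open>r\<close> annihilates \<open>N\<close>. By Noetherian induction, a maximal special ideal
  \<open>\<frak>m\<close> that is not a finite intersection of special primes is neither \<open>R\<close> nor prime; picking
  \<open>x y \<in> \<frak>m\<close> with \<open>x, y \<notin> \<frak>m\<close>, radicality gives
  \<open>\<frak>m = (\<frak>m : x) \<inter> (\<frak>m : (\<frak>m : x))\<close>, an intersection of two strictly larger special ideals.\<close>

definition ideal_colon :: "'r::comm_ring_1 set \<Rightarrow> 'r set \<Rightarrow> 'r set" where
  "ideal_colon b S = {t. \<forall>q\<in>S. t * q \<in> b}"

lemma ring_ideal_colon: "ring_ideal b \<Longrightarrow> ring_ideal (ideal_colon b S)"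
  unfolding ring_ideal_def ideal_colon_def by (auto simp: distrib_right mult.assoc)

lemma ring_ideal_subset_colon:
  assumes "ring_ideal b"
  shows "b \<subseteq> ideal_colon b S"
proof
  fix t assume "t \<in> b"
  then have "q * t \<in> b" for q using assms unfolding ring_ideal_def by blast
  then show "t \<in> ideal_colon b S" unfolding ideal_colon_def by (simp add: mult.commute)
qed

lemma ring_ideal_Int: "ring_ideal a \<Longrightarrow> ring_ideal b \<Longrightarrow> ring_ideal (a \<inter> b)"
  unfolding ring_ideal_def by auto

lemma ring_ideal_UNIV: "ring_ideal UNIV"
  unfolding ring_ideal_def by simp

lemma ring_ideal_mult_power_mem:
  assumes "ring_ideal b" "a * q \<in> b" "0 < n"
  shows "a * q ^ n \<in> b"
proof -
  obtain m where "n = Suc m" using \<open>0 < n\<close> gr0_implies_Suc by blast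
  have "q ^ m * (a * q) \<in> b" using assms(1,2) unfolding ring_ideal_def by blast
  then show ?thesis using \<open>n = Suc m\<close> by (simp add: mult_ac)
qed

lemma non_prime_ideal_colon_split:
  fixes M :: "'r::comm_ring_1 set"
  assumes "ring_ideal M" "M \<noteq> UNIV" "\<not> prime_ideal M"
    and square_mem: "\<And>r. r * r \<in> M \<Longrightarrow> r \<in> M"
  obtains x where "M \<subset> ideal_colon M {x}" "M \<subset> ideal_colon M (ideal_colon M {x})"
    "M = ideal_colon M {x} \<inter> ideal_colon M (ideal_colon M {x})"
proof -
  obtain x y where xy: "x * y \<in> M" "x \<notin> M" "y \<notin> M"
    using assms(1-3) unfolding prime_ideal_def by blast
  let ?Q = "ideal_colon M {x}"
  let ?Q' = "ideal_colon M ?Q"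
  have "M \<subseteq> ?Q" "M \<subseteq> ?Q'" using ring_ideal_subset_colon \<open>ring_ideal M\<close> by blast+
  moreover have "y \<in> ?Q" "x \<in> ?Q'"
    using xy(1) unfolding ideal_colon_def by (auto simp: mult.commute)
  moreover have "?Q \<inter> ?Q' \<subseteq> M"
    using square_mem unfolding ideal_colon_def by blast
  ultimately show thesis using that xy(2,3) by blast
qed

lemma noetherian_ideal_induct [consumes 2, case_names step]:
  fixes I :: "'r::comm_ring_1 set"
  assumes "noetherian_ring TYPE('r)" "ring_ideal I"
    and step: "\<And>I. ring_ideal I \<Longrightarrow> (\<And>J. ring_ideal J \<Longrightarrow> I \<subset> J \<Longrightarrow> P J) \<Longrightarrow> P I"
  shows "P I"
proof -
  let ?R = "{(J, I). ring_ideal I \<and> ring_ideal J \<and> (I :: 'r set) \<subset> J}"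
  have "wf ?R"
    unfolding wf_iff_no_infinite_down_chain
  proof
    assume "\<exists>f. \<forall>i. (f (Suc i), f i) \<in> ?R"
    then obtain f where "\<forall>i. (f (Suc i), f i) \<in> ?R" ..
    then have f: "\<And>i. ring_ideal (f i)" "\<And>i. f i \<subset> f (Suc i)" by auto
    then obtain n where "\<forall>m\<ge>n. f m = f n"
      using \<open>noetherian_ring TYPE('r)\<close> unfolding noetherian_ring_def by (meson less_imp_le)
    then have "f (Suc n) = f n" using le_Suc_eq by blast
    then show False using f(2)[of n] by simp
  qed
  then show ?thesis using \<open>ring_ideal I\<close>
  proof (induction I rule: wf_induct_rule)
    case (less I)
    show ?case
    proof (rule step)
      show "ring_ideal I" by (fact less.prems)
      fix J assume "ring_ideal J" "I \<subset> J"
      then show "P J" using less by blast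
    qed
  qed
qed

locale frobenius_module =
  fixes p :: nat and sc :: "'r::comm_ring_1 \<Rightarrow> 'g::ab_group_add \<Rightarrow> 'g" and phi :: "'g \<Rightarrow> 'g"
  assumes frob_module: "frob_module p sc phi"
begin

sublocale module sc
  using frob_module[unfolded frob_module_def] by (rule conjunct1)

lemma phi_add: "phi (g + h) = phi g + phi h"
  using frob_module unfolding frob_module_def by simp

lemma phi_scale: "phi (sc r g) = sc (r ^ p) (phi g)"
  using frob_module unfolding frob_module_def by simp

lemma phi_zero: "phi 0 = 0"
  using phi_add[of 0 0] by simp

lemma funpow_phi_zero: "(phi ^^ i) 0 = 0"
  by (induction i) (simp_all add: phi_zero)

lemma funpow_phi_add: "(phi ^^ i) (g + h) = (phi ^^ i) g + (phi ^^ i) h"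
  by (induction i) (simp_all add: phi_add)

lemma funpow_phi_scale: "(phi ^^ i) (sc r g) = sc (r ^ p ^ i) ((phi ^^ i) g)"
  by (induction i) (simp_all add: phi_scale power_mult[symmetric] mult.commute)

definition annihilates_monomial :: "'r \<Rightarrow> nat \<Rightarrow> 'g set \<Rightarrow> bool" where
  "annihilates_monomial t i N \<longleftrightarrow> (\<forall>g\<in>N. sc t ((phi ^^ i) g) = 0)"

definition special_witness :: "'r set \<Rightarrow> 'g set \<Rightarrow> bool" where
  "special_witness b N \<longleftrightarrow> frob_submodule sc phi N \<and> (\<forall>i t. annihilates_monomial t i N \<longleftrightarrow> t \<in> b)"

lemma special_ideals_iff: "b \<in> special_ideals sc phi \<longleftrightarrow> ring_ideal b \<and> (\<exists>N. special_witness b N)"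
proof -
  have "grann sc phi N = graded_ext b \<longleftrightarrow> (\<forall>i t. annihilates_monomial t i N \<longleftrightarrow> t \<in> b)"
    if "ring_ideal b" for N
  proof
    assume grann_eq: "grann sc phi N = graded_ext b"
    show "\<forall>i t. annihilates_monomial t i N \<longleftrightarrow> t \<in> b"
    proof (intro allI)
      fix i and t :: 'r
      define f where "f = (\<lambda>j::nat. if j = i then t else 0)"
      have "f \<in> skew_poly"
        unfolding skew_poly_def f_def by (simp add: finite_subset[of _ "{i}"])
      then have "f \<in> grann sc phi N \<longleftrightarrow> annihilates_monomial t i N"
        and "f \<in> graded_ext b \<longleftrightarrow> t \<in> b"
        using \<open>ring_ideal b\<close>
        unfolding grann_def graded_ext_def annihilates_monomial_def ring_ideal_def f_def by auto
      then show "annihilates_monomial t i N \<longleftrightarrow> t \<in> b" using grann_eq by simp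
    qed
  qed (auto simp: grann_def graded_ext_def annihilates_monomial_def)
  then show ?thesis unfolding special_ideals_def special_witness_def by auto
qed

lemma frob_submodule_zero: "frob_submodule sc phi {0}"
  unfolding frob_submodule_def subspace_def by (simp add: phi_zero)

lemma frob_submodule_sum:
  assumes "frob_submodule sc phi N1" "frob_submodule sc phi N2"
  shows "frob_submodule sc phi {g1 + g2 | g1 g2. g1 \<in> N1 \<and> g2 \<in> N2}" (is "frob_submodule sc phi ?N")
proof -
  have N1: "subspace N1" "\<And>g. g \<in> N1 \<Longrightarrow> phi g \<in> N1"
    and N2: "subspace N2" "\<And>g. g \<in> N2 \<Longrightarrow> phi g \<in> N2"
    using assms unfolding frob_submodule_def by auto
  have sum_mem: "g1 + g2 \<in> ?N" if "g1 \<in> N1" "g2 \<in> N2" for g1 g2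
    using that by blast
  have "0 + 0 \<in> ?N" using sum_mem subspace_0 N1(1) N2(1) by blast
  moreover have "sc c x \<in> ?N" "phi x \<in> ?N" if "x \<in> ?N" for c x
  proof -
    from that obtain g1 g2 where x: "x = g1 + g2" "g1 \<in> N1" "g2 \<in> N2" by blast
    show "sc c x \<in> ?N"
      using sum_mem[OF subspace_scale[OF N1(1) x(2)] subspace_scale[OF N2(1) x(3)]]
      by (simp add: x(1) scale_right_distrib)
    show "phi x \<in> ?N"
      using sum_mem[OF N1(2)[OF x(2)] N2(2)[OF x(3)]] by (simp add: x(1) phi_add)
  qed
  moreover have "x + y \<in> ?N" if "x \<in> ?N" "y \<in> ?N" for x y
  proof -
    from that obtain g1 g2 h1 h2 where x: "x = g1 + g2" "g1 \<in> N1" "g2 \<in> N2"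
      and y: "y = h1 + h2" "h1 \<in> N1" "h2 \<in> N2" by blast
    have "x + y = (g1 + h1) + (g2 + h2)" using x(1) y(1) by (simp add: algebra_simps)
    then show ?thesis
      using sum_mem[OF subspace_add[OF N1(1) x(2) y(2)] subspace_add[OF N2(1) x(3) y(3)]] by simp
  qed
  ultimately show ?thesis
    unfolding frob_submodule_def subspace_def by simp
qed

lemma frob_submodule_annihilated_part:
  assumes "frob_submodule sc phi N"
  shows "frob_submodule sc phi {g \<in> N. \<forall>i. \<forall>s\<in>C. sc s ((phi ^^ i) g) = 0}"
    (is "frob_submodule sc phi ?N")
proof -
  have N: "subspace N" "\<And>g. g \<in> N \<Longrightarrow> phi g \<in> N"
    using assms unfolding frob_submodule_def by auto
  have "0 \<in> ?N" using subspace_0[OF N(1)] by (simp add: funpow_phi_zero)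
  moreover have "sc c g \<in> ?N" if "g \<in> ?N" for c g
  proof -
    have "sc s ((phi ^^ i) (sc c g)) = sc (c ^ p ^ i) (sc s ((phi ^^ i) g))" for s i
      unfolding funpow_phi_scale by (rule scale_left_commute)
    then show ?thesis using that subspace_scale[OF N(1)] by (simp del: scale_scale)
  qed
  moreover have "g + h \<in> ?N" if "g \<in> ?N" "h \<in> ?N" for g h
    using that subspace_add[OF N(1)] by (simp add: funpow_phi_add scale_right_distrib)
  moreover have "phi g \<in> ?N" if "g \<in> ?N" for g
  proof -
    have "(phi ^^ i) (phi g) = (phi ^^ Suc i) g" for i
      by (simp add: funpow_swap1)
    then show ?thesis using that N(2) by (simp del: funpow.simps)
  qed
  ultimately show ?thesis
    unfolding frob_submodule_def subspace_def by blast
qed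

lemma special_witness_UNIV: "special_witness UNIV {0}"
  unfolding special_witness_def annihilates_monomial_def
  by (simp add: frob_submodule_zero funpow_phi_zero)

lemma special_witness_Int:
  assumes "special_witness b1 N1" "special_witness b2 N2"
  shows "special_witness (b1 \<inter> b2) {g1 + g2 | g1 g2. g1 \<in> N1 \<and> g2 \<in> N2}"
    (is "special_witness _ ?N")
proof -
  have N: "frob_submodule sc phi N1" "frob_submodule sc phi N2"
    and b1: "\<And>i t. annihilates_monomial t i N1 \<longleftrightarrow> t \<in> b1"
    and b2: "\<And>i t. annihilates_monomial t i N2 \<longleftrightarrow> t \<in> b2"
    using assms unfolding special_witness_def by auto
  have "0 \<in> N1" "0 \<in> N2"
    using N subspace_0 unfolding frob_submodule_def by auto
  then have summands: "N1 \<union> N2 \<subseteq> ?N" by force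
  have "annihilates_monomial t i ?N
      \<longleftrightarrow> annihilates_monomial t i N1 \<and> annihilates_monomial t i N2" for t i
  proof
    assume "annihilates_monomial t i ?N"
    then show "annihilates_monomial t i N1 \<and> annihilates_monomial t i N2"
      using summands unfolding annihilates_monomial_def by blast
  next
    assume "annihilates_monomial t i N1 \<and> annihilates_monomial t i N2"
    then show "annihilates_monomial t i ?N"
      unfolding annihilates_monomial_def by (auto simp: funpow_phi_add scale_right_distrib)
  qed
  then show ?thesis
    using frob_submodule_sum[OF N] b1 b2 unfolding special_witness_def by blast
qed

lemma special_ideals_UNIV: "UNIV \<in> special_ideals sc phi"
  using special_witness_UNIV ring_ideal_UNIV special_ideals_iff by blast

lemma special_ideals_Int:
  assumes "a \<in> special_ideals sc phi" "b \<in> special_ideals sc phi"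
  shows "a \<inter> b \<in> special_ideals sc phi"
proof -
  obtain Na Nb where "ring_ideal a" "special_witness a Na" "ring_ideal b" "special_witness b Nb"
    using assms special_ideals_iff by blast
  then show ?thesis
    using special_witness_Int ring_ideal_Int special_ideals_iff by blast
qed

lemma special_ideals_Inter_list:
  "set bs \<subseteq> special_ideals sc phi \<Longrightarrow> \<Inter> (set bs) \<in> special_ideals sc phi"
  by (induction bs) (simp_all add: special_ideals_UNIV special_ideals_Int)

end

locale torsion_free_frobenius_module = frobenius_module p sc phi
  for p and sc :: "'r::comm_ring_1 \<Rightarrow> 'g::ab_group_add \<Rightarrow> 'g" and phi +
  assumes torsion_free: "x_torsion_free phi" and two_le_p: "2 \<le> p"
begin

lemma special_witness_pow_p_imp_mem:
  assumes "special_witness b N" "r ^ p \<in> b"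
  shows "r \<in> b"
proof -
  have "annihilates_monomial (r ^ p) 1 N"
    using assms unfolding special_witness_def by blast
  then have "annihilates_monomial r 0 N"
    using torsion_free unfolding annihilates_monomial_def x_torsion_free_def
    by (simp add: phi_scale[symmetric])
  then show ?thesis using assms unfolding special_witness_def by blast
qed

lemma special_witness_pow_p_pow_imp_mem:
  assumes "special_witness b N"
  shows "r ^ p ^ i \<in> b \<Longrightarrow> r \<in> b"
proof (induction i arbitrary: r)
  case (Suc i)
  then have "(r ^ p) ^ p ^ i \<in> b" by (simp add: power_mult[symmetric] mult.commute)
  then show ?case using Suc.IH special_witness_pow_p_imp_mem assms by blast
qed simp

lemma special_witness_colon_mem:
  assumes "special_witness b N" "ring_ideal b" "q \<in> S"
    and t: "annihilates_monomial t i {g \<in> N. \<forall>i. \<forall>s\<in>ideal_colon b S. sc s ((phi ^^ i) g) = 0}"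
      (is "annihilates_monomial t i ?N")
  shows "t * q \<in> b"
proof -
  have N: "subspace N" and b: "\<And>i t. annihilates_monomial t i N \<longleftrightarrow> t \<in> b"
    using assms(1) unfolding special_witness_def frob_submodule_def by auto
  have p_pow_pos: "0 < p ^ j" for j using two_le_p by simp
  have q_mem: "sc q g \<in> ?N" if "g \<in> N" for g
  proof -
    have "sc s ((phi ^^ j) (sc q g)) = 0" if "s \<in> ideal_colon b S" for j s
    proof -
      have "s * q \<in> b" using that \<open>q \<in> S\<close> unfolding ideal_colon_def by blast
      then have "s * q ^ p ^ j \<in> b"
        using ring_ideal_mult_power_mem assms(2) p_pow_pos by blast
      then have "annihilates_monomial (s * q ^ p ^ j) j N" using b by blast
      then show ?thesis
        using \<open>g \<in> N\<close> unfolding annihilates_monomial_def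
        by (simp add: funpow_phi_scale scale_scale)
    qed
    then show ?thesis using \<open>g \<in> N\<close> subspace_scale[OF N] by blast
  qed
  have "annihilates_monomial (t * q ^ p ^ i) i N"
    unfolding annihilates_monomial_def
  proof
    fix g assume "g \<in> N"
    then have "sc t ((phi ^^ i) (sc q g)) = 0"
      using t q_mem unfolding annihilates_monomial_def by blast
    then show "sc (t * q ^ p ^ i) ((phi ^^ i) g) = 0" by (simp add: funpow_phi_scale scale_scale)
  qed
  then have "q ^ p ^ i * t \<in> b" using b by (simp add: mult.commute)
  then have "q ^ p ^ i * t ^ p ^ i \<in> b"
    using ring_ideal_mult_power_mem assms(2) p_pow_pos by blast
  then have "(t * q) ^ p ^ i \<in> b" by (simp add: power_mult_distrib mult.commute)
  then show "t * q \<in> b" using special_witness_pow_p_pow_imp_mem assms(1) by blast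
qed

lemma special_witness_colon:
  assumes "special_witness b N" "ring_ideal b"
  shows "special_witness (ideal_colon b S) {g \<in> N. \<forall>i. \<forall>s\<in>ideal_colon b S. sc s ((phi ^^ i) g) = 0}"
    (is "special_witness ?C ?N")
proof -
  have "frob_submodule sc phi N" using assms(1) unfolding special_witness_def by blast
  moreover have "annihilates_monomial t i ?N \<longleftrightarrow> t \<in> ?C" for t i
  proof
    assume "annihilates_monomial t i ?N"
    then show "t \<in> ?C"
      using special_witness_colon_mem[OF assms] unfolding ideal_colon_def by blast
  qed (auto simp: annihilates_monomial_def)
  ultimately show ?thesis
    using frob_submodule_annihilated_part unfolding special_witness_def by blast
qed

lemma special_ideals_colon:
  assumes "b \<in> special_ideals sc phi"
  shows "ideal_colon b S \<in> special_ideals sc phi"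
proof -
  obtain N where "ring_ideal b" "special_witness b N"
    using assms special_ideals_iff by blast
  then show ?thesis
    using special_witness_colon ring_ideal_colon special_ideals_iff by blast
qed

lemma special_ideals_square_mem:
  assumes "b \<in> special_ideals sc phi" "r * r \<in> b"
  shows "r \<in> b"
proof -
  obtain N where "ring_ideal b" "special_witness b N"
    using assms(1) special_ideals_iff by blast
  have "r ^ p = r ^ (p - 2) * (r * r)"
    using two_le_p by (metis le_add_diff_inverse2 power_add power2_eq_square)
  also have "\<dots> \<in> b"
    using \<open>ring_ideal b\<close> assms(2) unfolding ring_ideal_def by blast
  finally show ?thesis
    using \<open>special_witness b N\<close> special_witness_pow_p_imp_mem by blast
qed

lemma special_ideal_eq_Inter_special_primes:
  assumes "noetherian_ring TYPE('r)" "b \<in> special_ideals sc phi"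
  shows "\<exists>Ps. set Ps \<subseteq> special_ideals sc phi \<inter> {P. prime_ideal P} \<and> b = \<Inter> (set Ps)"
proof -
  let ?SP = "special_ideals sc phi \<inter> {P. prime_ideal P}"
  have "ring_ideal b" using assms(2) special_ideals_iff by blast
  with assms(1) have "b \<in> special_ideals sc phi \<longrightarrow> (\<exists>Ps. set Ps \<subseteq> ?SP \<and> b = \<Inter> (set Ps))"
  proof (induction b rule: noetherian_ideal_induct)
    case (step M)
    have IH: "\<exists>Ps. set Ps \<subseteq> ?SP \<and> J = \<Inter> (set Ps)"
      if "J \<in> special_ideals sc phi" "M \<subset> J" for J
      using step that special_ideals_iff by blast
    show ?case
    proof
      assume M: "M \<in> special_ideals sc phi"
      consider "M = UNIV" | "prime_ideal M" | "M \<noteq> UNIV" "\<not> prime_ideal M" by blast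
      then show "\<exists>Ps. set Ps \<subseteq> ?SP \<and> M = \<Inter> (set Ps)"
      proof cases
        case 1
        then show ?thesis by (intro exI[of _ "[]"]) simp
      next
        case 2
        then show ?thesis using M by (intro exI[of _ "[M]"]) simp
      next
        case 3
        have "r \<in> M" if "r * r \<in> M" for r
          using M that special_ideals_square_mem by blast
        then obtain x where split: "M \<subset> ideal_colon M {x}"
          "M \<subset> ideal_colon M (ideal_colon M {x})"
          "M = ideal_colon M {x} \<inter> ideal_colon M (ideal_colon M {x})"
          using non_prime_ideal_colon_split[OF \<open>ring_ideal M\<close> 3] by blast
        obtain Ps where "set Ps \<subseteq> ?SP" "ideal_colon M {x} = \<Inter> (set Ps)"
          using IH[OF special_ideals_colon[OF M] split(1)] by blast
        moreover obtain Qs where "set Qs \<subseteq> ?SP" "ideal_colon M (ideal_colon M {x}) = \<Inter> (set Qs)"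
          using IH[OF special_ideals_colon[OF M] split(2)] by blast
        ultimately show ?thesis using split(3) by (intro exI[of _ "Ps @ Qs"]) auto
      qed
    qed
  qed
  then show ?thesis using assms(2) by blast
qed

end

theorem corollary3p7:
  fixes sc :: "'r::comm_ring_1 \<Rightarrow> 'g::ab_group_add \<Rightarrow> 'g"
    and phi :: "'g \<Rightarrow> 'g"
    and p :: nat
  assumes "noetherian_ring TYPE('r)"
    and "prime p" and "CHAR('r) = p"
    and "frob_module p sc phi"
    and "x_torsion_free phi"
  shows "special_ideals sc phi =
    {\<Inter> (set Ps) | Ps. set Ps \<subseteq> special_ideals sc phi \<inter> {P. prime_ideal P}}"
proof -
  interpret torsion_free_frobenius_module p sc phi
    using assms(2,4,5) by unfold_locales (simp_all add: prime_ge_2_nat)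
  show ?thesis
  proof (intro equalityI subsetI)
    fix b assume "b \<in> special_ideals sc phi"
    then show "b \<in> {\<Inter> (set Ps) | Ps. set Ps \<subseteq> special_ideals sc phi \<inter> {P. prime_ideal P}}"
      using special_ideal_eq_Inter_special_primes[OF assms(1)] by blast
  qed (use special_ideals_Inter_list in blast)
qed

end
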